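(* With $B_n,P_n$ as in the context, the block lengths $L_n=|B_n|$ grow exponentially in $n$, and the pillar lengths $m_n=|P_n|$ also grow exponentially in $n$.
   Context: Generation operator: for a finite vector $R=\langle r_1,\dots,r_m\rangle$ of positive integers and $s\in\{1,3\}$, $\mathcal{G}(R,s)= s^{r_1}\,(4-s)^{r_2}\,s^{r_3}\cdots$ (the $i$-th run consists of $r_i$ copies of $s$ if $i$ is odd and of $4-s$ if $i$ is even), of length $\sum_i r_i$. For a finite word $W$ over $\{1,3\}$, $R(W)$ denotes $W$ itself regarded as a vector of positive integers. Define $B_1=\mathcal{G}(\langle 1,3,3,3,1\rangle,1)=1\,3\,3\,3\,1\,1\,1\,3\,3\,3\,1$, $P_1=3$, and for $n\ge1$: $B_{n+1}=B_n\,P_n\,B_n$ (concatenation), $P_{n+1}=\mathcal{G}(R(P_n),3)$. "Grows exponentially" means bounded below by $C\gamma^n$ for some constants $C>0$, $\gamma>1$. *)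

theory Defs
  imports Complex_Main
begin

text \<open>Generation operator: gen R s = s^r1 (4-s)^r2 s^r3 ...; words over {1,3} are nat lists.\<close>
fun gen :: "nat list \<Rightarrow> nat \<Rightarrow> nat list" where
  "gen [] s = []"
| "gen (r # rs) s = replicate r s @ gen rs (4 - s)"

definition B1 :: "nat list" where
  "B1 = gen [1,3,3,3,1] 1"

text \<open>Pillars P_n and blocks B_n, indexed from n = 1 (index 0 is an unused dummy).\<close>
fun Pw :: "nat \<Rightarrow> nat list" where
  "Pw 0 = []"
| "Pw (Suc 0) = [3]"
| "Pw (Suc (Suc n)) = gen (Pw (Suc n)) 3"

fun Bw :: "nat \<Rightarrow> nat list" where
  "Bw 0 = []"
| "Bw (Suc 0) = B1"
| "Bw (Suc (Suc n)) = Bw (Suc n) @ Pw (Suc n) @ Bw (Suc n)"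

end

theory Submission
  imports Defs
begin

text \<open>
  Each block contains two copies of the previous one, so |B_n| doubles at every step.
  For the pillars, |P_(n+1)| is the letter sum of P_n, a word over {1,3}. Since P_n is
  itself generated from a word over {1,3} starting with the letter 3, every run of 1s
  (of length at most 3) follows a nonempty run of 3s, so at least a quarter of its letters
  are 3s. Hence its letter sum is at least 3/2 times its length.
\<close>

lemma length_gen: "length (gen R s) = sum_list R"
  by (induction R s rule: gen.induct) auto

lemma set_gen_subset: "s \<le> 4 \<Longrightarrow> set (gen R s) \<subseteq> {s, 4 - s}"
  by (induction R s rule: gen.induct) auto

lemma count_list_replicate: "count_list (replicate n x) y = (if x = y then n else 0)"
  by (induction n) auto

lemma gen_Cons_Cons:
  "s \<le> 4 \<Longrightarrow> gen (x # y # R) s = replicate x s @ replicate y (4 - s) @ gen R s"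
  by simp

lemma length_gen_le_count:
  assumes "s \<le> 4" "s \<noteq> 2" "set R \<subseteq> {1..c}"
  shows "length (gen R s) \<le> Suc c * count_list (gen R s) s"
  using assms(3)
proof (induction R rule: induct_list012)
  case (3 x y R)
  then have "length (gen R s) \<le> Suc c * count_list (gen R s) s" "y \<le> c * x"
    using le_trans[OF _ mult_le_mono2[of 1 x c]] by auto
  moreover have "4 - s \<noteq> s"
    using assms(2) by linarith
  ultimately show ?case
    using assms(1)
    by (simp add: gen_Cons_Cons count_list_replicate algebra_simps)
qed (auto simp: count_list_replicate)

lemma sum_list_13_words:
  "set xs \<subseteq> {1, 3} \<Longrightarrow> sum_list xs = length xs + 2 * count_list xs (3::nat)"
  by (induction xs) auto

lemma set_Pw: "set (Pw (Suc k)) \<subseteq> {1, 3}"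
  by (induction k) (use set_gen_subset[of 3] in auto)

lemma length_Pw_le_count: "length (Pw (Suc k)) \<le> 4 * count_list (Pw (Suc k)) 3"
proof (cases k)
  case (Suc j)
  have "set (Pw (Suc j)) \<subseteq> {1..3}"
    using set_Pw[of j] by auto
  then show ?thesis
    using length_gen_le_count[of 3 "Pw (Suc j)" 3] Suc by simp
qed simp

lemma length_Pw_Suc_ge: "3 * length (Pw (Suc k)) \<le> 2 * length (Pw (Suc (Suc k)))"
proof -
  have "length (Pw (Suc (Suc k))) = length (Pw (Suc k)) + 2 * count_list (Pw (Suc k)) 3"
    using sum_list_13_words[OF set_Pw] by (simp add: length_gen)
  with length_Pw_le_count[of k] show ?thesis
    by linarith
qed

lemma geometric_lower_bound:
  fixes f :: "nat \<Rightarrow> real"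
  assumes "q \<ge> 0" "\<And>k. q * f k \<le> f (Suc k)"
  shows "f 0 * q ^ k \<le> f k"
proof (induction k)
  case (Suc k)
  have "f 0 * q ^ Suc k = q * (f 0 * q ^ k)"
    by simp
  also have "\<dots> \<le> q * f k"
    using Suc assms(1) by (rule mult_left_mono)
  also have "\<dots> \<le> f (Suc k)"
    by (rule assms(2))
  finally show ?case .
qed simp

lemma length_Pw_ge: "(3/2) ^ k \<le> real (length (Pw (Suc k)))"
proof -
  have "3/2 * real (length (Pw (Suc k))) \<le> real (length (Pw (Suc (Suc k))))" for k
    using length_Pw_Suc_ge[of k] by linarith
  from geometric_lower_bound[of "3/2" "\<lambda>k. real (length (Pw (Suc k)))", OF _ this]
  show ?thesis
    by simp
qed

lemma length_Bw_ge: "11 * 2 ^ k \<le> real (length (Bw (Suc k)))"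
  using geometric_lower_bound[of 2 "\<lambda>k. real (length (Bw (Suc k)))" k]
  by (simp add: B1_def numeral_eq_Suc mult.commute)

theorem proposition5p2:
  shows "(\<exists>C::real. \<exists>\<gamma>::real. C > 0 \<and> \<gamma> > 1 \<and>
            (\<forall>n\<ge>1. real (length (Bw n)) \<ge> C * \<gamma> ^ n))
       \<and> (\<exists>C::real. \<exists>\<gamma>::real. C > 0 \<and> \<gamma> > 1 \<and>
            (\<forall>n\<ge>1. real (length (Pw n)) \<ge> C * \<gamma> ^ n))"
proof (intro conjI)
  have "real (length (Bw n)) \<ge> 11/2 * 2 ^ n" if "n \<ge> 1" for n
    using that length_Bw_ge[of "n - 1"] by (cases n) auto
  then show "\<exists>C::real. \<exists>\<gamma>::real. C > 0 \<and> \<gamma> > 1 \<and>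
      (\<forall>n\<ge>1. real (length (Bw n)) \<ge> C * \<gamma> ^ n)"
    by (intro exI[of _ "11/2"] exI[of _ 2]) auto
  have "real (length (Pw n)) \<ge> 2/3 * (3/2) ^ n" if "n \<ge> 1" for n
    using that length_Pw_ge[of "n - 1"] by (cases n) auto
  then show "\<exists>C::real. \<exists>\<gamma>::real. C > 0 \<and> \<gamma> > 1 \<and>
      (\<forall>n\<ge>1. real (length (Pw n)) \<ge> C * \<gamma> ^ n)"
    by (intro exI[of _ "2/3"] exI[of _ "3/2"]) auto
qed

end
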